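(* Let $\mathcal{N}$ be a fully-connected feed-forward network with layer widths $n_0=d,n_1,\dots,n_H=1$, mass $\Psi=\prod_{i=0}^H n_i$ and with weight set $\mathcal{W}=\{w_1,\dots,w_N\}$ of real numbers, whose expected output is \[ Y_N = q\sum_{i_1,\dots,i_H=1}^{N}\ \sum_{j=1}^{r_{i_1,\dots,i_H}} X^{(j)}_{i_1,\dots,i_H}\,\rho\prod_{k=1}^H w_{i_k}, \] where $q=\Psi^{-(H-1)/(2H)}$, $\rho\in(0,1]$, $r_{i_1,\dots,i_H}\in\{0,1\}$ indicates whether the ordered weight configuration $(w_{i_1},\dots,w_{i_H})$ is the sequence of weights along some input-to-output path (so $\sum r_{i_1,\dots,i_H}=\Psi$), and the $X^{(j)}_{i_1,\dots,i_H}$ are independent $N(0,1)$ random variables. Let $\mathcal{M}$ be an $(s,\epsilon)$-reduction image of $\mathcal{N}$ for some $s\le N$ and $\epsilon\in[0,0.5]$, and let $Y_s$ be the expected output of $\mathcal{M}$ (defined by the same formula with $\mathcal{M}$'s edge weights). Then \[ \mathrm{corr}(\mathrm{sign}(Y_s),\mathrm{sign}(Y_N))\ \ge\ \frac{1-2\epsilon}{1+2\epsilon}, \] where $\mathrm{corr}(A,B)=\frac{\mathbb{E}[(A-\mathbb{E}A)(B-\mathbb{E}B)]}{\mathrm{std}(A)\,\mathrm{std}(B)}$.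
   Context: A network $\mathcal{M}$ is an $(s,\epsilon)$-reduction image of $\mathcal{N}$ (for $\epsilon\in[0,1]$) if it has the same graph of connections as $\mathcal{N}$ but its edge weights take only $s\le N$ distinct values, and the prediction accuracies of $\mathcal{N}$ and $\mathcal{M}$ differ by no more than $\epsilon$, i.e. they classify at most an $\epsilon$ fraction of data points differently (the prediction being the sign of the output; $\mathrm{sign}(Y_s)$ and $\mathrm{sign}(Y_N)$ are random, with randomness coming from the inputs $X$). *)

theory Defs
  imports "HOL-Probability.Probability"
begin

text \<open>A fully-connected feed-forward network with H layers of edges and layer widths
  n 0 = d, n 1, ..., n H = 1.  Nodes of layer k are 0 ..< n k.  An edge weight assignment
  w k a b is the weight of the edge from node a of layer k-1 to node b of layer k
  (for 1 <= k <= H).  An input-to-output path picks one node p k in every layer k <= H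
  (normalised by p k = 0 for k > H).\<close>

definition paths :: "(nat \<Rightarrow> nat) \<Rightarrow> nat \<Rightarrow> (nat \<Rightarrow> nat) set" where
  "paths n H = {p. (\<forall>k\<le>H. p k < n k) \<and> (\<forall>k>H. p k = 0)}"

definition edges :: "(nat \<Rightarrow> nat) \<Rightarrow> nat \<Rightarrow> (nat \<times> nat \<times> nat) set" where
  "edges n H = {(k, a, b). 1 \<le> k \<and> k \<le> H \<and> a < n (k - 1) \<and> b < n k}"

definition weight_values :: "(nat \<Rightarrow> nat) \<Rightarrow> nat \<Rightarrow> (nat \<Rightarrow> nat \<Rightarrow> nat \<Rightarrow> real) \<Rightarrow> real set" where
  "weight_values n H w = (\<lambda>(k, a, b). w k a b) ` edges n H"

definition path_weight :: "nat \<Rightarrow> (nat \<Rightarrow> nat \<Rightarrow> nat \<Rightarrow> real) \<Rightarrow> (nat \<Rightarrow> nat) \<Rightarrow> real" where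
  "path_weight H w p = (\<Prod>k\<in>{1..H}. w k (p (k - 1)) (p k))"

definition mass :: "(nat \<Rightarrow> nat) \<Rightarrow> nat \<Rightarrow> nat" where
  "mass n H = (\<Prod>i\<in>{0..H}. n i)"

definition qconst :: "(nat \<Rightarrow> nat) \<Rightarrow> nat \<Rightarrow> real" where
  "qconst n H = real (mass n H) powr (- (real H - 1) / (2 * real H))"

text \<open>Since every path is determined by its sequence of edges (each edge carries its own weight
  index), each ordered weight configuration occurs on at most one path (r in {0,1}), so the
  sum over configurations with multiplicities r is the sum over paths.\<close>
definition net_output :: "(nat \<Rightarrow> nat) \<Rightarrow> nat \<Rightarrow> real \<Rightarrow> (nat \<Rightarrow> nat \<Rightarrow> nat \<Rightarrow> real)
    \<Rightarrow> ((nat \<Rightarrow> nat) \<Rightarrow> 'a \<Rightarrow> real) \<Rightarrow> 'a \<Rightarrow> real" where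
  "net_output n H \<rho> w X \<omega> = qconst n H * (\<Sum>p\<in>paths n H. X p \<omega> * \<rho> * path_weight H w p)"

text \<open>(s, eps)-reduction image: same graph (same widths), edge weights w' taking exactly s
  distinct values with s <= N (N = number of weights/edges), and the predictions (signs)
  differ on at most an eps fraction (probability) of inputs.\<close>
definition reduction_image :: "'a measure \<Rightarrow> (nat \<Rightarrow> nat) \<Rightarrow> nat \<Rightarrow> real
    \<Rightarrow> ((nat \<Rightarrow> nat) \<Rightarrow> 'a \<Rightarrow> real) \<Rightarrow> (nat \<Rightarrow> nat \<Rightarrow> nat \<Rightarrow> real) \<Rightarrow> (nat \<Rightarrow> nat \<Rightarrow> nat \<Rightarrow> real)
    \<Rightarrow> nat \<Rightarrow> real \<Rightarrow> bool" where
  "reduction_image M n H \<rho> X w w' s \<epsilon> \<longleftrightarrow>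
     s \<le> card (edges n H) \<and> card (weight_values n H w') = s \<and> 0 \<le> \<epsilon> \<and> \<epsilon> \<le> 1 \<and>
     measure M {\<omega> \<in> space M. sgn (net_output n H \<rho> w' X \<omega>) \<noteq> sgn (net_output n H \<rho> w X \<omega>)}
       \<le> \<epsilon>"

definition variance_of :: "'a measure \<Rightarrow> ('a \<Rightarrow> real) \<Rightarrow> real" where
  "variance_of M A = (\<integral>\<omega>. (A \<omega> - (\<integral>x. A x \<partial>M))\<^sup>2 \<partial>M)"

definition corr :: "'a measure \<Rightarrow> ('a \<Rightarrow> real) \<Rightarrow> ('a \<Rightarrow> real) \<Rightarrow> real" where
  "corr M A B =
     (\<integral>\<omega>. (A \<omega> - (\<integral>x. A x \<partial>M)) * (B \<omega> - (\<integral>x. B x \<partial>M)) \<partial>M)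
       / (sqrt (variance_of M A) * sqrt (variance_of M B))"

end

theory Submission
  imports Defs
begin

text \<open>The output of a network is a linear combination of independent standard normal
  variables, hence a centred Gaussian (non-degenerate, since the sign of the output has
  nonzero variance). Its sign is therefore \<open>\<plusminus>1\<close> almost surely with mean zero
  and variance one, for both networks. For two such sign variables the correlation is
  \<open>E[AB] = 1 - 2 P(A \<noteq> B) \<ge> 1 - 2\<epsilon>\<close>, and \<open>1 - 2\<epsilon> \<ge> (1 - 2\<epsilon>)/(1 + 2\<epsilon>)\<close>.\<close>

lemma (in prob_space) std_normal_combination_distributed:
  fixes X :: "'i \<Rightarrow> 'a \<Rightarrow> real" and c :: "'i \<Rightarrow> real"
  assumes ind: "indep_vars (\<lambda>_. borel) X P"
    and normal: "\<forall>p\<in>P. distributed M lborel (X p) std_normal_density"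
    and "finite P" and "\<exists>p\<in>P. c p \<noteq> 0"
  shows "distributed M lborel (\<lambda>\<omega>. \<Sum>p\<in>P. c p * X p \<omega>)
           (normal_density 0 (sqrt (\<Sum>p\<in>P. (c p)\<^sup>2)))"
proof -
  define P' where "P' = {p\<in>P. c p \<noteq> 0}"
  have "finite P'" "P' \<noteq> {}" using assms(3,4) by (auto simp: P'_def)
  have sum_P': "(\<Sum>p\<in>P. f p) = (\<Sum>p\<in>P'. f p)" if "\<And>p. c p = 0 \<Longrightarrow> f p = 0" for f :: "'i \<Rightarrow> real"
    by (rule sum.mono_neutral_right) (use assms(3) that in \<open>auto simp: P'_def\<close>)
  have "indep_vars (\<lambda>_. borel) (\<lambda>p \<omega>. c p * X p \<omega>) P'"
    by (rule indep_vars_compose2[where Y="\<lambda>p x. c p * x" and M'="\<lambda>_. borel"])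
       (auto intro: indep_vars_subset[OF ind] simp: P'_def)
  moreover have "distributed M lborel (\<lambda>\<omega>. c p * X p \<omega>) (normal_density 0 \<bar>c p\<bar>)"
    if "p \<in> P'" for p
    using normal_density_affine[of "X p" 0 1 "c p" 0] that normal by (auto simp: P'_def)
  ultimately have "distributed M lborel (\<lambda>\<omega>. \<Sum>p\<in>P'. c p * X p \<omega>)
                     (normal_density 0 (sqrt (\<Sum>p\<in>P'. \<bar>c p\<bar>\<^sup>2)))"
    using sum_indep_normal[OF \<open>finite P'\<close> \<open>P' \<noteq> {}\<close>, of "\<lambda>p \<omega>. c p * X p \<omega>" "\<lambda>p. \<bar>c p\<bar>" "\<lambda>_. 0"]
    by (auto simp: P'_def)
  then show ?thesis by (simp add: sum_P')
qed

lemma (in prob_space) AE_centered_normal_nonzero: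
  assumes "distributed M lborel Y (normal_density 0 \<sigma>)"
  shows "AE \<omega> in M. Y \<omega> \<noteq> 0"
proof -
  have "AE y in density lborel (normal_density 0 \<sigma>). y \<noteq> 0"
    by (subst AE_density) (auto intro: AE_mp[OF AE_lborel_singleton])
  then have "AE y in distr M lborel Y. y \<noteq> 0"
    unfolding distributed_distr_eq_density[OF assms] .
  then show ?thesis
    by (rule AE_distrD[rotated]) (use assms in \<open>auto dest: distributed_measurable\<close>)
qed

lemma (in prob_space) integral_sgn_centered_normal:
  assumes Y: "distributed M lborel Y (normal_density 0 \<sigma>)" and "0 < \<sigma>"
  shows "(\<integral>\<omega>. sgn (Y \<omega>) \<partial>M) = 0"
proof -
  have meas: "Y \<in> borel_measurable M" using Y by (auto dest: distributed_measurable)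
  have "distributed M lborel (\<lambda>\<omega>. 0 + (-1) * Y \<omega>) (normal_density (0 + (-1) * 0) (\<bar>-1\<bar> * \<sigma>))"
    by (rule normal_density_affine[OF Y \<open>0 < \<sigma>\<close>]) simp
  then have symm: "distr M lborel Y = distr M lborel (\<lambda>\<omega>. - Y \<omega>)"
    using Y by (simp add: distributed_distr_eq_density)
  have "(\<integral>\<omega>. sgn (Y \<omega>) \<partial>M) = (\<integral>y. sgn y \<partial>distr M lborel Y)"
    using meas by (simp add: integral_distr)
  also have "\<dots> = (\<integral>\<omega>. sgn (- Y \<omega>) \<partial>M)"
    using meas by (simp add: symm integral_distr)
  also have "\<dots> = - (\<integral>\<omega>. sgn (Y \<omega>) \<partial>M)" by (simp add: sgn_minus)
  finally show ?thesis by simp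
qed

lemma (in prob_space) sgn_std_normal_combination:
  fixes X :: "'i \<Rightarrow> 'a \<Rightarrow> real" and c :: "'i \<Rightarrow> real"
  assumes "indep_vars (\<lambda>_. borel) X P"
    and "\<forall>p\<in>P. distributed M lborel (X p) std_normal_density"
    and var: "variance_of M (\<lambda>\<omega>. sgn (\<Sum>p\<in>P. c p * X p \<omega>)) \<noteq> 0"
  shows "(AE \<omega> in M. (\<Sum>p\<in>P. c p * X p \<omega>) \<noteq> 0)"
    and "(\<integral>\<omega>. sgn (\<Sum>p\<in>P. c p * X p \<omega>) \<partial>M) = 0"
proof -
  have nondegenerate: "finite P \<and> (\<exists>p\<in>P. c p \<noteq> 0)"
  proof (rule ccontr)
    assume "\<not> ?thesis"
    then have "(\<Sum>p\<in>P. c p * X p \<omega>) = 0" for \<omega> by auto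
    then show False using var by (simp add: variance_of_def)
  qed
  then have "0 < sqrt (\<Sum>p\<in>P. (c p)\<^sup>2)"
    by (auto intro!: sum_pos2)
  moreover have "distributed M lborel (\<lambda>\<omega>. \<Sum>p\<in>P. c p * X p \<omega>)
                   (normal_density 0 (sqrt (\<Sum>p\<in>P. (c p)\<^sup>2)))"
    using std_normal_combination_distributed[OF assms(1,2)] nondegenerate by blast
  ultimately show "AE \<omega> in M. (\<Sum>p\<in>P. c p * X p \<omega>) \<noteq> 0"
    and "(\<integral>\<omega>. sgn (\<Sum>p\<in>P. c p * X p \<omega>) \<partial>M) = 0"
    by (auto intro: AE_centered_normal_nonzero integral_sgn_centered_normal)
qed

lemma (in prob_space) variance_of_sgn:
  assumes "Y \<in> borel_measurable M" and "AE \<omega> in M. Y \<omega> \<noteq> 0"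
    and "(\<integral>\<omega>. sgn (Y \<omega>) \<partial>M) = 0"
  shows "variance_of M (\<lambda>\<omega>. sgn (Y \<omega>)) = 1"
proof -
  have "variance_of M (\<lambda>\<omega>. sgn (Y \<omega>)) = (\<integral>\<omega>. 1 \<partial>M)"
    unfolding variance_of_def assms(3)
    by (rule integral_cong_AE) (use assms in \<open>auto simp: sgn_if elim: AE_mp\<close>)
  then show ?thesis by (simp add: prob_space)
qed

lemma (in prob_space) corr_sgn_eq:
  assumes Y: "Y \<in> borel_measurable M" "AE \<omega> in M. Y \<omega> \<noteq> 0" "(\<integral>\<omega>. sgn (Y \<omega>) \<partial>M) = 0"
    and Z: "Z \<in> borel_measurable M" "AE \<omega> in M. Z \<omega> \<noteq> 0" "(\<integral>\<omega>. sgn (Z \<omega>) \<partial>M) = 0"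
  shows "corr M (\<lambda>\<omega>. sgn (Y \<omega>)) (\<lambda>\<omega>. sgn (Z \<omega>))
           = 1 - 2 * prob {\<omega> \<in> space M. sgn (Y \<omega>) \<noteq> sgn (Z \<omega>)}"
proof -
  define S where "S = {\<omega> \<in> space M. sgn (Y \<omega>) \<noteq> sgn (Z \<omega>)}"
  have S: "S \<in> events" unfolding S_def using Y(1) Z(1) by measurable
  have "AE \<omega> in M. sgn (Y \<omega>) * sgn (Z \<omega>) = 1 - 2 * indicator S \<omega>"
    using Y(2) Z(2) AE_space by eventually_elim (auto simp: S_def sgn_if)
  then have "(\<integral>\<omega>. sgn (Y \<omega>) * sgn (Z \<omega>) \<partial>M) = (\<integral>\<omega>. 1 - 2 * indicator S \<omega> \<partial>M)"
    using Y(1) Z(1) S by (intro integral_cong_AE) auto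
  also have "\<dots> = 1 - 2 * prob S"
  proof -
    have "integrable M (\<lambda>\<omega>. 2 * indicator S \<omega> :: real)"
      using S by (intro integrable_mult_right integrable_real_indicator) (auto simp: less_top[symmetric])
    then show ?thesis
      using S by (simp add: Bochner_Integration.integral_diff prob_space)
  qed
  finally show ?thesis
    using variance_of_sgn[OF Y] variance_of_sgn[OF Z]
    by (simp add: corr_def Y(3) Z(3) S_def)
qed

theorem theorem3p2:
  fixes M :: "'a measure" and n :: "nat \<Rightarrow> nat" and H d s :: nat and \<rho> \<epsilon> :: real
    and w w' :: "nat \<Rightarrow> nat \<Rightarrow> nat \<Rightarrow> real" and X :: "(nat \<Rightarrow> nat) \<Rightarrow> 'a \<Rightarrow> real"
  assumes "prob_space M"
    and "1 \<le> H" and "n 0 = d" and "n H = 1" and "\<forall>i\<le>H. 1 \<le> n i"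
    and "0 < \<rho>" and "\<rho> \<le> 1"
    and "prob_space.indep_vars M (\<lambda>_. borel) X (paths n H)"
    and "\<forall>p\<in>paths n H. distributed M lborel (X p) std_normal_density"
    and "reduction_image M n H \<rho> X w w' s \<epsilon>"
    and "0 \<le> \<epsilon>" and "\<epsilon> \<le> 1/2"
    and "variance_of M (\<lambda>\<omega>. sgn (net_output n H \<rho> w X \<omega>)) \<noteq> 0"
    and "variance_of M (\<lambda>\<omega>. sgn (net_output n H \<rho> w' X \<omega>)) \<noteq> 0"
  shows "corr M (\<lambda>\<omega>. sgn (net_output n H \<rho> w' X \<omega>)) (\<lambda>\<omega>. sgn (net_output n H \<rho> w X \<omega>))
           \<ge> (1 - 2 * \<epsilon>) / (1 + 2 * \<epsilon>)"
proof -
  interpret prob_space M by (rule assms(1))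
  have output_sum: "net_output n H \<rho> v X
      = (\<lambda>\<omega>. \<Sum>p\<in>paths n H. (qconst n H * \<rho> * path_weight H v p) * X p \<omega>)" for v
    unfolding net_output_def by (simp add: sum_distrib_left mult_ac)
  have "X p \<in> borel_measurable M" if "p \<in> paths n H" for p
    using assms(9) that measurable_lborel1 by (metis distributed_measurable)
  then have meas: "net_output n H \<rho> v X \<in> borel_measurable M" for v
    unfolding output_sum by (auto intro!: borel_measurable_sum borel_measurable_times)
  have sgn_output: "(AE \<omega> in M. net_output n H \<rho> v X \<omega> \<noteq> 0)
      \<and> (\<integral>\<omega>. sgn (net_output n H \<rho> v X \<omega>) \<partial>M) = 0"
    if "variance_of M (\<lambda>\<omega>. sgn (net_output n H \<rho> v X \<omega>)) \<noteq> 0" for v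
    using sgn_std_normal_combination[OF assms(8,9), of "\<lambda>p. qconst n H * \<rho> * path_weight H v p"]
      that unfolding output_sum by blast
  have "corr M (\<lambda>\<omega>. sgn (net_output n H \<rho> w' X \<omega>)) (\<lambda>\<omega>. sgn (net_output n H \<rho> w X \<omega>))
      = 1 - 2 * prob {\<omega> \<in> space M. sgn (net_output n H \<rho> w' X \<omega>) \<noteq> sgn (net_output n H \<rho> w X \<omega>)}"
    using sgn_output[OF assms(14)] sgn_output[OF assms(13)] by (intro corr_sgn_eq meas) auto
  moreover have "(1 - 2 * \<epsilon>) / (1 + 2 * \<epsilon>) \<le> 1 - 2 * \<epsilon>"
    using assms(11,12) by (simp add: divide_le_eq mult_le_cancel_left1)
  ultimately show ?thesis
    using assms(10) unfolding reduction_image_def by linarith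
qed

end
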